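(* For every metric space $(X,d_X)$, every $q\in[1,\infty)$ and every $m,n\in\mathbb{N}$, $$\mathcal{C}^{\{-1,0,1\}}_{q,m,n}(X,d_X)\le 6^{1/q}\max_{k\in\{1,\dots,n\}}\mathcal{C}^{\{-1,1\}}_{q,m,k}(X,d_X)\qquad\text{and}\qquad \mathcal{C}^{\{-1,1\}}_{q,2m,n}(X,d_X)\le 2\,\mathcal{C}^{\{-1,0,1\}}_{q,m,n}(X,d_X).$$
   Context: $\mathbb{Z}_{2m}=\mathbb{Z}/2m\mathbb{Z}$, arithmetic mod $2m$, $e_i$ the standard basis. $\mathcal{C}^{\{-1,0,1\}}_{q,m,n}(X,d_X)$ is the infimum of $\mathcal{C}>0$ such that every $f:\mathbb{Z}_{2m}^n\to X$ satisfies $\big(\sum_{i=1}^n\sum_{x\in\mathbb{Z}_{2m}^n}d_X(f(x+me_i),f(x))^q\big)^{1/q}\le\mathcal{C}m\big(3^{-n}\sum_{\varepsilon\in\{-1,0,1\}^n}\sum_{x\in\mathbb{Z}_{2m}^n}d_X(f(x+\varepsilon),f(x))^q\big)^{1/q}$. $\mathcal{C}^{\{-1,1\}}_{q,m,n}(X,d_X)$ is the infimum of $\mathcal{C}_*>0$ such that every $f:\mathbb{Z}_{2m}^n\to X$ satisfies the same inequality with the right-hand average replaced by $2^{-n}\sum_{\varepsilon\in\{-1,1\}^n}\sum_{x\in\mathbb{Z}_{2m}^n}d_X(f(x+\varepsilon),f(x))^q$ and $\mathcal{C}$ by $\mathcal{C}_*$. *)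

theory Defs
  imports "HOL-Analysis.Analysis"
begin

text \<open>Points of Z_{2m}^n are represented as functions nat => int whose values at
  indices i < n lie in {0..<2m} and which vanish at indices i >= n.\<close>

definition grid :: "nat \<Rightarrow> nat \<Rightarrow> (nat \<Rightarrow> int) set" where
  "grid m n = {x. (\<forall>i<n. 0 \<le> x i \<and> x i < 2 * int m) \<and> (\<forall>i\<ge>n. x i = 0)}"

definition gadd :: "nat \<Rightarrow> nat \<Rightarrow> (nat \<Rightarrow> int) \<Rightarrow> (nat \<Rightarrow> int) \<Rightarrow> (nat \<Rightarrow> int)" where
  "gadd m n x y = (\<lambda>i. if i < n then (x i + y i) mod (2 * int m) else 0)"

definition cube :: "int set \<Rightarrow> nat \<Rightarrow> (nat \<Rightarrow> int) set" where
  "cube S n = {e. (\<forall>i<n. e i \<in> S) \<and> (\<forall>i\<ge>n. e i = 0)}"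

definition mei :: "nat \<Rightarrow> nat \<Rightarrow> (nat \<Rightarrow> int)" where
  "mei m i = (\<lambda>j. if j = i then int m else 0)"

definition lhs_sum :: "real \<Rightarrow> nat \<Rightarrow> nat \<Rightarrow> ((nat \<Rightarrow> int) \<Rightarrow> 'a::metric_space) \<Rightarrow> real" where
  "lhs_sum q m n f = (\<Sum>i<n. \<Sum>x\<in>grid m n. dist (f (gadd m n x (mei m i))) (f x) powr q)"

definition rhs_avg :: "int set \<Rightarrow> real \<Rightarrow> nat \<Rightarrow> nat \<Rightarrow> ((nat \<Rightarrow> int) \<Rightarrow> 'a::metric_space) \<Rightarrow> real" where
  "rhs_avg S q m n f = (1 / real (card S) ^ n) *
     (\<Sum>e\<in>cube S n. \<Sum>x\<in>grid m n. dist (f (gadd m n x e)) (f x) powr q)"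

text \<open>The constant C^S_{q,m,n}(X,d_X), as an extended real (infimum of the empty set = \<infinity>).\<close>
definition Cconst :: "int set \<Rightarrow> real \<Rightarrow> nat \<Rightarrow> nat \<Rightarrow> 'a::metric_space itself \<Rightarrow> ereal" where
  "Cconst S q m n X = Inf {ereal C | C. C > 0 \<and>
     (\<forall>f :: (nat \<Rightarrow> int) \<Rightarrow> 'a.
        lhs_sum q m n f powr (1/q) \<le> C * real m * rhs_avg S q m n f powr (1/q))}"

end

(*
  Both inequalities come from restricting f to translates of embedded subgrids and averaging.

  If A is a set of k coordinates, Z_2m^k embeds into Z_2m^n along A, and the images of the
  diagonal directions {-1,1}^k are exactly the vectors of {-1,0,1}^n with support A.  Summing the
  k-dimensional {-1,1}-inequalities over all A with weight 2^|A| counts each m e_i with total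
  weight 2 * 3^(n-1) on the left and each direction of {-1,0,1}^n exactly once on the right,
  giving the {-1,0,1}-inequality with constant (3/2)^(1/q) <= 6^(1/q).

  Doubling embeds Z_2m^n into Z_4m^n.  For d in {-1,0,1}^n and any sign vector e on the
  complement of the support of d, both d + e and d - e lie in {-1,1}^n and add up to 2d, so the
  q-th power triangle inequality bounds the doubled {-1,0,1}-energy by the {-1,1}-energy; this
  even gives the second inequality without the factor 2.
*)

theory Submission
  imports Defs "HOL-Probability.Product_PMF" "HOL-Library.Function_Algebras"
begin

lemma grid_eq_PiE_dflt: "grid m n = PiE_dflt {..<n} 0 (\<lambda>_. {0..<2 * int m})"
  by (auto simp: grid_def PiE_dflt_def not_less)

lemma cube_eq_PiE_dflt: "cube S n = PiE_dflt {..<n} 0 (\<lambda>_. S)"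
  by (auto simp: cube_def PiE_dflt_def not_less)

lemma finite_grid [simp]: "finite (grid m n)"
  unfolding grid_eq_PiE_dflt by (intro finite_PiE_dflt) auto

lemma card_grid: "card (grid m n) = (2 * m) ^ n"
  unfolding grid_eq_PiE_dflt by (simp add: card_PiE_dflt nat_mult_distrib)

lemma finite_cube [simp]: "finite S \<Longrightarrow> finite (cube S n)"
  unfolding cube_eq_PiE_dflt by (intro finite_PiE_dflt) auto

lemma gadd_gadd: "gadd m n (gadd m n x u) v = gadd m n x (u + v)"
  by (auto simp: gadd_def mod_add_left_eq add.assoc)

lemma gadd_cong:
  assumes "\<And>i. i < n \<Longrightarrow> u i mod (2 * int m) = w i mod (2 * int m)"
  shows "gadd m n x u = gadd m n x w"
proof
  fix i
  show "gadd m n x u i = gadd m n x w i"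
    using assms[of i] mod_add_right_eq[of "x i" "u i" "2 * int m"]
      mod_add_right_eq[of "x i" "w i" "2 * int m"]
    by (auto simp: gadd_def)
qed

lemma gadd_in_grid: "m \<ge> 1 \<Longrightarrow> gadd m n x v \<in> grid m n"
  by (simp add: gadd_def grid_def)

lemma bij_betw_gadd_grid:
  assumes "m \<ge> 1"
  shows "bij_betw (\<lambda>x. gadd m n x v) (grid m n) (grid m n)"
proof (rule bij_betw_byWitness[where f' = "\<lambda>x. gadd m n x (- v)"])
  have "gadd m n x 0 = x" if "x \<in> grid m n" for x
    using that by (auto simp: gadd_def grid_def)
  then show "\<forall>x\<in>grid m n. gadd m n (gadd m n x v) (- v) = x"
    and "\<forall>x\<in>grid m n. gadd m n (gadd m n x (- v)) v = x"
    by (simp_all add: gadd_gadd)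
qed (use gadd_in_grid assms in blast)+

lemma sum_grid_gadd:
  "m \<ge> 1 \<Longrightarrow> (\<Sum>x\<in>grid m n. F (gadd m n x v)) = (\<Sum>x\<in>grid m n. F x)"
  using sum.reindex_bij_betw[OF bij_betw_gadd_grid] .

lemma powr_add_le:
  fixes a b q :: real
  assumes "a \<ge> 0" "b \<ge> 0" "q \<ge> 1"
  shows "(a + b) powr q \<le> 2 powr (q - 1) * (a powr q + b powr q)"
proof (cases "a = 0 \<or> b = 0")
  case True
  have "1 \<le> (2::real) powr (q - 1)"
    using assms by (simp add: ge_one_powr_ge_zero)
  with True show ?thesis
    by (auto intro: order_trans[OF _ mult_right_mono[of 1]])
next
  case False
  with assms have "a > 0" "b > 0" by auto
  then have "((a + b) / 2) powr q \<le> (a powr q + b powr q) / 2"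
    using convex_onD[OF powr_convex[OF \<open>q \<ge> 1\<close>], of "1/2" a b] by (simp add: field_simps)
  moreover have "(a + b) powr q = 2 * 2 powr (q - 1) * ((a + b) / 2) powr q"
    using \<open>a > 0\<close> \<open>b > 0\<close> by (simp add: powr_divide powr_diff)
  ultimately show ?thesis by simp
qed

lemma dist_powr_triangle:
  fixes a b c :: "'a::metric_space"
  assumes "q \<ge> 1"
  shows "dist a c powr q \<le> 2 powr (q - 1) * (dist a b powr q + dist b c powr q)"
proof -
  have "dist a c powr q \<le> (dist a b + dist b c) powr q"
    using assms dist_triangle by (intro powr_mono2) auto
  also have "\<dots> \<le> 2 powr (q - 1) * (dist a b powr q + dist b c powr q)"
    using assms by (intro powr_add_le) auto
  finally show ?thesis .
qed

definition shift_energy ::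
    "real \<Rightarrow> nat \<Rightarrow> nat \<Rightarrow> ((nat \<Rightarrow> int) \<Rightarrow> 'a::metric_space) \<Rightarrow> (nat \<Rightarrow> int) \<Rightarrow> real" where
  "shift_energy q m n f v = (\<Sum>x\<in>grid m n. dist (f (gadd m n x v)) (f x) powr q)"

lemma lhs_sum_eq: "lhs_sum q m n f = (\<Sum>i<n. shift_energy q m n f (mei m i))"
  unfolding lhs_sum_def shift_energy_def ..

lemma rhs_avg_eq:
  "rhs_avg S q m n f = (\<Sum>e\<in>cube S n. shift_energy q m n f e) / real (card S) ^ n"
  unfolding rhs_avg_def shift_energy_def by simp

lemma shift_energy_nonneg: "shift_energy q m n f v \<ge> 0"
  unfolding shift_energy_def by (intro sum_nonneg) simp

lemma lhs_sum_nonneg: "lhs_sum q m n f \<ge> 0"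
  unfolding lhs_sum_eq by (intro sum_nonneg shift_energy_nonneg)

lemma rhs_avg_nonneg: "rhs_avg S q m n f \<ge> 0"
  unfolding rhs_avg_eq by (intro divide_nonneg_nonneg sum_nonneg shift_energy_nonneg) simp

lemma shift_energy_add_le:
  assumes "m \<ge> 1" "q \<ge> 1"
  shows "shift_energy q m n f (u + v)
           \<le> 2 powr (q - 1) * (shift_energy q m n f u + shift_energy q m n f v)"
proof -
  have "shift_energy q m n f (u + v)
      \<le> (\<Sum>x\<in>grid m n. 2 powr (q - 1) * (dist (f (gadd m n (gadd m n x u) v)) (f (gadd m n x u)) powr q
                                          + dist (f (gadd m n x u)) (f x) powr q))"
    unfolding shift_energy_def gadd_gadd[symmetric] by (intro sum_mono dist_powr_triangle assms(2))
  also have "\<dots> = 2 powr (q - 1) * (shift_energy q m n f v + shift_energy q m n f u)"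
    unfolding shift_energy_def sum.distrib sum_distrib_left[symmetric]
      sum_grid_gadd[OF assms(1), of "\<lambda>x. dist (f (gadd m n x v)) (f x) powr q"] ..
  finally show ?thesis by (simp add: add.commute)
qed

lemma powr_le_powr_iff:
  fixes x y q :: real
  assumes "0 \<le> x" "0 \<le> y" "0 < q"
  shows "x powr q \<le> y powr q \<longleftrightarrow> x \<le> y"
  using assms powr_mono2[of q x y] powr_less_mono2[of q y x] by (auto simp: not_le[symmetric])

definition admissible :: "int set \<Rightarrow> real \<Rightarrow> nat \<Rightarrow> nat \<Rightarrow> real \<Rightarrow> 'a::metric_space itself \<Rightarrow> bool" where
  "admissible S q m n C X \<longleftrightarrow> (\<forall>f :: (nat \<Rightarrow> int) \<Rightarrow> 'a.
     lhs_sum q m n f powr (1/q) \<le> C * real m * rhs_avg S q m n f powr (1/q))"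

lemma Cconst_eq_Inf_admissible:
  "Cconst S q m n X = Inf {ereal C | C. C > 0 \<and> admissible S q m n C X}"
  unfolding Cconst_def admissible_def ..

lemma admissible_iff_powr:
  assumes "q \<ge> 1" "C \<ge> 0"
  shows "admissible S q m n C TYPE('a::metric_space) \<longleftrightarrow>
    (\<forall>f :: (nat \<Rightarrow> int) \<Rightarrow> 'a. lhs_sum q m n f \<le> (C * real m) powr q * rhs_avg S q m n f)"
proof -
  have "a powr (1/q) \<le> b * c powr (1/q) \<longleftrightarrow> a \<le> b powr q * c"
    if "a \<ge> 0" "b \<ge> 0" "c \<ge> 0" for a b c :: real
  proof -
    have "a powr (1/q) \<le> b * c powr (1/q) \<longleftrightarrow> (a powr (1/q)) powr q \<le> (b * c powr (1/q)) powr q"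
      using that assms by (intro powr_le_powr_iff[symmetric]) auto
    also have "\<dots> \<longleftrightarrow> a \<le> b powr q * c"
      using that assms by (simp add: powr_powr powr_mult)
    finally show ?thesis .
  qed
  then show ?thesis
    unfolding admissible_def using assms lhs_sum_nonneg rhs_avg_nonneg
    by (metis mult_nonneg_nonneg of_nat_0_le_iff)
qed

lemma admissible_mono:
  assumes "admissible S q m n C X" "C \<le> C'"
  shows "admissible S q m n C' X"
  using assms unfolding admissible_def
  by (meson order_trans mult_right_mono of_nat_0_le_iff powr_ge_zero)

lemma Cconst_nonneg: "Cconst S q m n X \<ge> 0"
  unfolding Cconst_def by (rule Inf_greatest) auto

lemma Cconst_le_admissible:
  "admissible S q m n C X \<Longrightarrow> C > 0 \<Longrightarrow> Cconst S q m n X \<le> ereal C"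
  unfolding Cconst_eq_Inf_admissible by (rule Inf_lower) blast

lemma admissible_if_Cconst_less:
  assumes "Cconst S q m n X < ereal C"
  shows "admissible S q m n C X"
proof -
  obtain C' where "C' > 0" "admissible S q m n C' X" "ereal C' < ereal C"
    using assms unfolding Cconst_eq_Inf_admissible Inf_less_iff by blast
  then show ?thesis by (auto intro: admissible_mono)
qed

section \<open>Pulling back along embedded tori\<close>

lemma sum_shift_energy_pullback:
  assumes "m' \<ge> 1"
    and hom: "\<And>x y e. gadd m' n x (T (gadd m k y e)) = gadd m' n (gadd m' n x (T y)) (T e)"
  shows "(\<Sum>x\<in>grid m' n. shift_energy q m k (\<lambda>y. f (gadd m' n x (T y))) e)
           = real (card (grid m k)) * shift_energy q m' n f (T e)"
proof -
  have "(\<Sum>x\<in>grid m' n. shift_energy q m k (\<lambda>y. f (gadd m' n x (T y))) e)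
      = (\<Sum>y\<in>grid m k. \<Sum>x\<in>grid m' n.
           dist (f (gadd m' n (gadd m' n x (T y)) (T e))) (f (gadd m' n x (T y))) powr q)"
    unfolding shift_energy_def hom by (rule sum.swap)
  also have "\<dots> = (\<Sum>y\<in>grid m k. shift_energy q m' n f (T e))"
    unfolding shift_energy_def by (intro sum.cong refl sum_grid_gadd assms(1))
  finally show ?thesis by simp
qed

(* hom says that T is a homomorphism Z_2m^k -> Z_2m'^n; the k-dimensional inequality is
   applied to f on each translate x + T(Z_2m^k) and the results are summed over x. *)
lemma admissible_pullback:
  fixes f :: "(nat \<Rightarrow> int) \<Rightarrow> 'a::metric_space"
  assumes adm: "admissible S q m k C TYPE('a)" and "q \<ge> 1" "C \<ge> 0" "m \<ge> 1" "m' \<ge> 1"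
    and hom: "\<And>x y e. gadd m' n x (T (gadd m k y e)) = gadd m' n (gadd m' n x (T y)) (T e)"
  shows "(\<Sum>j<k. shift_energy q m' n f (T (mei m j)))
           \<le> (C * real m) powr q * ((\<Sum>e\<in>cube S k. shift_energy q m' n f (T e)) / real (card S) ^ k)"
proof -
  let ?g = "\<lambda>x y. f (gadd m' n x (T y))" and ?N = "real (card (grid m k))"
  let ?K = "(C * real m) powr q"
  note pullback = sum_shift_energy_pullback[where T = T and k = k, OF \<open>m' \<ge> 1\<close> hom]
  have "(\<Sum>x\<in>grid m' n. lhs_sum q m k (?g x))
      = (\<Sum>j<k. \<Sum>x\<in>grid m' n. shift_energy q m k (?g x) (mei m j))"
    unfolding lhs_sum_eq by (rule sum.swap)
  also have "\<dots> = ?N * (\<Sum>j<k. shift_energy q m' n f (T (mei m j)))"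
    by (simp only: pullback sum_distrib_left)
  finally have lhs: "(\<Sum>x\<in>grid m' n. lhs_sum q m k (?g x))
                     = ?N * (\<Sum>j<k. shift_energy q m' n f (T (mei m j)))" .
  have "(\<Sum>x\<in>grid m' n. rhs_avg S q m k (?g x))
      = (\<Sum>e\<in>cube S k. \<Sum>x\<in>grid m' n. shift_energy q m k (?g x) e) / real (card S) ^ k"
    unfolding rhs_avg_eq sum_divide_distrib[symmetric] by (rule arg_cong[OF sum.swap])
  also have "\<dots> = ?N * ((\<Sum>e\<in>cube S k. shift_energy q m' n f (T e)) / real (card S) ^ k)"
    by (simp only: pullback sum_distrib_left times_divide_eq_right)
  finally have rhs: "(\<Sum>x\<in>grid m' n. rhs_avg S q m k (?g x))
                     = ?N * ((\<Sum>e\<in>cube S k. shift_energy q m' n f (T e)) / real (card S) ^ k)" .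
  have "(\<Sum>x\<in>grid m' n. lhs_sum q m k (?g x)) \<le> ?K * (\<Sum>x\<in>grid m' n. rhs_avg S q m k (?g x))"
    using adm unfolding sum_distrib_left admissible_iff_powr[OF \<open>q \<ge> 1\<close> \<open>C \<ge> 0\<close>]
    by (intro sum_mono) blast
  moreover have "?N > 0"
    using \<open>m \<ge> 1\<close> by (simp add: card_grid)
  ultimately show ?thesis
    unfolding lhs rhs mult.left_commute[of ?K] by (simp only: mult_le_cancel_left_pos)
qed

definition signs :: "nat set \<Rightarrow> (nat \<Rightarrow> int) set" where
  "signs A = PiE_dflt A 0 (\<lambda>_. {-1, 1})"

lemma finite_signs [simp]: "finite A \<Longrightarrow> finite (signs A)"
  unfolding signs_def by (intro finite_PiE_dflt) auto

lemma card_signs: "finite A \<Longrightarrow> card (signs A) = 2 ^ card A"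
  unfolding signs_def by (simp add: card_PiE_dflt numeral_2_eq_2)

lemma cube_pm1_eq_signs: "cube {-1, 1} n = signs {..<n}"
  unfolding cube_eq_PiE_dflt signs_def ..

lemma sum_cube_eq_sum_signs:
  "(\<Sum>d\<in>cube {-1, 0, 1} n. F d) = (\<Sum>A\<in>Pow {..<n}. \<Sum>d\<in>signs A. F d)"
proof -
  let ?supp = "\<lambda>d::nat \<Rightarrow> int. {i. d i \<noteq> 0}"
  have "?supp ` cube {-1, 0, 1} n \<subseteq> Pow {..<n}"
    unfolding cube_def by (auto simp: not_less[symmetric])
  moreover have "{d \<in> cube {-1, 0, 1} n. ?supp d = A} = signs A" if "A \<subseteq> {..<n}" for A
    using that by (force simp: cube_def signs_def PiE_dflt_def)
  ultimately show ?thesis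
    by (auto simp: sum.group[symmetric, of "cube {-1, 0, 1} n" "Pow {..<n}" ?supp F] intro!: sum.cong)
qed

lemma sum_signs_add:
  assumes "finite A" "finite B" "A \<inter> B = {}"
  shows "(\<Sum>d\<in>signs A. \<Sum>e\<in>signs B. F (d + e)) = (\<Sum>s\<in>signs (A \<union> B). F s)"
proof -
  let ?split = "\<lambda>s. (\<lambda>i. if i \<in> A then s i else 0, \<lambda>i. if i \<in> B then s i else 0)"
  have "bij_betw (\<lambda>(d, e). d + e) (signs A \<times> signs B) (signs (A \<union> B))"
    by (rule bij_betw_byWitness[where f' = ?split])
       (use assms(3) in \<open>force simp: signs_def PiE_dflt_def fun_eq_iff\<close>)+
  then show ?thesis
    by (simp add: sum.cartesian_product sum.reindex_bij_betw[symmetric] case_prod_beta)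
qed

lemma sum_signs_uminus: "(\<Sum>e\<in>signs B. F (- e)) = (\<Sum>e\<in>signs B. F e)"
  by (rule sum.reindex_bij_witness[where i = uminus and j = uminus])
     (auto simp: signs_def PiE_dflt_def)

lemma bij_betw_PiE_dflt_reindex:
  assumes "bij_betw \<kappa> A A'"
  shows "bij_betw (\<lambda>y i. if i \<in> A then y (\<kappa> i) else 0) (PiE_dflt A' 0 (\<lambda>_. S)) (PiE_dflt A 0 (\<lambda>_. S))"
  by (rule bij_betw_byWitness[where f' = "\<lambda>e j. if j \<in> A' then e (inv_into A \<kappa> j) else 0"])
     (use assms bij_betw_inv_into[OF assms] bij_betw_inv_into_left[OF assms]
        bij_betw_inv_into_right[OF assms] in \<open>force simp: PiE_dflt_def fun_eq_iff dest: bij_betwE\<close>)+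

section \<open>From {-1,1} to {-1,0,1}\<close>

lemma sum_shift_energy_mei_le_signs:
  fixes f :: "(nat \<Rightarrow> int) \<Rightarrow> 'a::metric_space"
  assumes adm: "admissible {-1, 1} q m (card A) C TYPE('a)"
    and "q \<ge> 1" "C \<ge> 0" "m \<ge> 1" "A \<subseteq> {..<n}"
  shows "2 ^ card A * (\<Sum>i\<in>A. shift_energy q m n f (mei m i))
           \<le> (C * real m) powr q * (\<Sum>e\<in>signs A. shift_energy q m n f e)"
proof -
  define k where "k = card A"
  have "finite A"
    using \<open>A \<subseteq> {..<n}\<close> finite_subset by blast
  then obtain \<kappa> where \<kappa>: "bij_betw \<kappa> A {..<k}"
    unfolding k_def lessThan_atLeast0 using ex_bij_betw_finite_nat by blast
  define T where "T y = (\<lambda>i. if i \<in> A then y (\<kappa> i) else 0)" for y :: "nat \<Rightarrow> int"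
  have hom: "gadd m n x (T (gadd m k y e)) = gadd m n (gadd m n x (T y)) (T e)" for x y e
    unfolding gadd_gadd
    by (rule gadd_cong) (use \<kappa> in \<open>auto simp: T_def gadd_def mod_add_eq dest: bij_betwE\<close>)
  have "T (mei m j) = mei m (inv_into A \<kappa> j)" if "j < k" for j
    using that bij_betw_inv_into_right[OF \<kappa>] bij_betw_inv_into_left[OF \<kappa>]
      bij_betwE[OF bij_betw_inv_into[OF \<kappa>]]
    by (auto simp: T_def mei_def fun_eq_iff)
  then have "(\<Sum>j<k. shift_energy q m n f (T (mei m j))) = (\<Sum>i\<in>A. shift_energy q m n f (mei m i))"
    using sum.reindex_bij_betw[OF bij_betw_inv_into[OF \<kappa>], of "\<lambda>i. shift_energy q m n f (mei m i)"]
    by simp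
  moreover have "(\<Sum>e\<in>cube {-1, 1} k. shift_energy q m n f (T e)) = (\<Sum>e\<in>signs A. shift_energy q m n f e)"
    unfolding cube_eq_PiE_dflt signs_def T_def
    by (rule sum.reindex_bij_betw[OF bij_betw_PiE_dflt_reindex[OF \<kappa>]])
  ultimately have "(\<Sum>i\<in>A. shift_energy q m n f (mei m i))
      \<le> (C * real m) powr q * ((\<Sum>e\<in>signs A. shift_energy q m n f e) / 2 ^ k)"
    using admissible_pullback[where T = T and m' = m and n = n,
        OF adm[folded k_def] \<open>q \<ge> 1\<close> \<open>C \<ge> 0\<close> \<open>m \<ge> 1\<close> \<open>m \<ge> 1\<close> hom, of f]
    by simp
  then show ?thesis
    unfolding k_def by (simp add: field_simps)
qed

lemma sum_Pow_two_power:
  "finite S \<Longrightarrow> (\<Sum>B\<in>Pow S. 2 ^ card B) = (3 :: 'a::comm_semiring_1) ^ card S"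
  using prod_add[of S "\<lambda>_. 2 :: 'a" "\<lambda>_. 1"] by simp

lemma sum_Pow_mem_two_power:
  assumes "finite S" "i \<in> S"
  shows "(\<Sum>B\<in>Pow S. if i \<in> B then 2 ^ card B else 0) = 2 * (3 :: 'a::comm_semiring_1) ^ (card S - 1)"
proof -
  let ?g = "\<lambda>x. if x = i then 0 else 1 :: 'a"
  have "(\<Prod>x\<in>S. 2 + ?g x) = 2 * 3 ^ (card S - 1)"
    using assms by (simp add: prod.remove[of S i] prod.If_cases)
  moreover have "2 ^ card B * (\<Prod>x\<in>S - B. ?g x) = (if i \<in> B then 2 ^ card B else 0)"
    if "B \<subseteq> S" for B
    using assms that by (simp add: prod.If_cases)
  ultimately show ?thesis
    using prod_add[of S "\<lambda>_. 2" ?g] assms by simp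
qed

lemma lhs_sum_le_of_admissible_signs:
  fixes f :: "(nat \<Rightarrow> int) \<Rightarrow> 'a::metric_space"
  assumes adm: "\<forall>k\<in>{1..n}. admissible {-1, 1} q m k C TYPE('a)"
    and "q \<ge> 1" "C \<ge> 0" "m \<ge> 1" "n \<ge> 1"
  shows "lhs_sum q m n f \<le> 3 / 2 * (C * real m) powr q * rhs_avg {-1, 0, 1} q m n f"
proof -
  let ?E = "shift_energy q m n f" and ?K = "(C * real m) powr q"
  have slice: "2 ^ card A * (\<Sum>i\<in>A. ?E (mei m i)) \<le> ?K * (\<Sum>e\<in>signs A. ?E e)"
    if "A \<in> Pow {..<n}" for A
  proof (cases "A = {}")
    case False
    with that have "card A \<in> {1..n}"
      using card_mono[of "{..<n}" A] by (auto simp: Suc_le_eq card_gt_0_iff finite_subset)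
    with that adm show ?thesis
      using \<open>q \<ge> 1\<close> \<open>C \<ge> 0\<close> \<open>m \<ge> 1\<close> by (intro sum_shift_energy_mei_le_signs) auto
  qed (simp add: sum_nonneg shift_energy_nonneg)
  have "2 * 3 ^ (n - 1) * lhs_sum q m n f = (\<Sum>i<n. 2 * 3 ^ (n - 1) * ?E (mei m i))"
    by (simp add: lhs_sum_eq sum_distrib_left)
  also have "\<dots> = (\<Sum>i<n. \<Sum>A\<in>Pow {..<n}. (if i \<in> A then 2 ^ card A else 0) * ?E (mei m i))"
    by (intro sum.cong refl) (simp add: sum_Pow_mem_two_power flip: sum_distrib_right)
  also have "\<dots> = (\<Sum>A\<in>Pow {..<n}. \<Sum>i<n. (if i \<in> A then 2 ^ card A else 0) * ?E (mei m i))"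
    by (rule sum.swap)
  also have "\<dots> = (\<Sum>A\<in>Pow {..<n}. 2 ^ card A * (\<Sum>i\<in>A. ?E (mei m i)))"
    by (intro sum.cong refl)
      (simp add: sum_distrib_left if_distrib[of "\<lambda>x. x * _"] sum.If_cases Int_absorb1)
  also have "\<dots> \<le> (\<Sum>A\<in>Pow {..<n}. ?K * (\<Sum>e\<in>signs A. ?E e))"
    by (intro sum_mono slice)
  also have "\<dots> = ?K * (3 ^ n * rhs_avg {-1, 0, 1} q m n f)"
    by (simp add: sum_cube_eq_sum_signs rhs_avg_eq flip: sum_distrib_left)
  finally show ?thesis
    using \<open>n \<ge> 1\<close> by (cases n) (simp_all add: field_simps)
qed

lemma admissible_cube_of_admissible_signs:
  assumes "\<forall>k\<in>{1..n}. admissible {-1, 1} q m k C TYPE('a::metric_space)"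
    and "q \<ge> 1" "C \<ge> 0" "m \<ge> 1" "n \<ge> 1"
  shows "admissible {-1, 0, 1} q m n ((3 / 2) powr (1 / q) * C) TYPE('a)"
proof -
  have "((3 / 2) powr (1 / q) * C * real m) powr q = 3 / 2 * (C * real m) powr q"
    using \<open>q \<ge> 1\<close> \<open>C \<ge> 0\<close> by (simp add: powr_mult powr_powr mult.assoc)
  moreover have "(3 / 2) powr (1 / q) * C \<ge> 0"
    using \<open>C \<ge> 0\<close> by simp
  ultimately show ?thesis
    using lhs_sum_le_of_admissible_signs[OF assms] admissible_iff_powr[OF \<open>q \<ge> 1\<close>] by metis
qed

section \<open>From {-1,0,1} to {-1,1} by doubling\<close>

lemma shift_energy_double_le:
  assumes "m \<ge> 1" "q \<ge> 1" "finite B"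
  shows "card (signs B) * shift_energy q m n f (2 * d)
           \<le> 2 powr q * (\<Sum>e\<in>signs B. shift_energy q m n f (d + e))"
proof -
  let ?E = "shift_energy q m n f"
  have "?E (2 * d) \<le> 2 powr (q - 1) * (?E (d + e) + ?E (d + - e))" for e
    using shift_energy_add_le[OF assms(1,2), of n f "d + e" "d + - e"]
    by (simp add: fun_eq_iff)
  then have "card (signs B) * ?E (2 * d) \<le> (\<Sum>e\<in>signs B. 2 powr (q - 1) * (?E (d + e) + ?E (d + - e)))"
    using sum_mono[of "signs B" "\<lambda>_. ?E (2 * d)"] by simp
  also have "\<dots> = 2 powr (q - 1) * ((\<Sum>e\<in>signs B. ?E (d + e)) + (\<Sum>e\<in>signs B. ?E (d + - e)))"
    by (simp only: sum.distrib[symmetric] sum_distrib_left)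
  also have "\<dots> = 2 powr q * (\<Sum>e\<in>signs B. ?E (d + e))"
    using sum_signs_uminus[of "\<lambda>e. ?E (d + e)" B] by (simp add: powr_diff)
  finally show ?thesis .
qed

lemma sum_signs_shift_energy_double_le:
  assumes "m \<ge> 1" "q \<ge> 1" "A \<subseteq> {..<n}"
  shows "2 ^ n * (\<Sum>d\<in>signs A. shift_energy q m n f (2 * d))
           \<le> 2 ^ card A * (2 powr q * (\<Sum>s\<in>cube {-1, 1} n. shift_energy q m n f s))"
proof -
  let ?E = "shift_energy q m n f"
  define B where "B = {..<n} - A"
  have "finite A"
    using assms(3) finite_subset by blast
  have "finite B" "A \<inter> B = {}" "A \<union> B = {..<n}"
    using assms(3) unfolding B_def by auto
  have "card A \<le> n"
    using card_mono[OF finite_lessThan assms(3)] by simp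
  have "card B = n - card A"
    unfolding B_def card_Diff_subset[OF \<open>finite A\<close> assms(3)] card_lessThan ..
  then have "2 ^ n = 2 ^ card A * (card (signs B) :: real)"
    using \<open>card A \<le> n\<close> \<open>finite B\<close> by (simp add: card_signs flip: power_add)
  then have "2 ^ n * (\<Sum>d\<in>signs A. ?E (2 * d))
      = 2 ^ card A * (\<Sum>d\<in>signs A. card (signs B) * ?E (2 * d))"
    by (simp only: mult.assoc sum_distrib_left)
  also have "\<dots> \<le> 2 ^ card A * (\<Sum>d\<in>signs A. 2 powr q * (\<Sum>e\<in>signs B. ?E (d + e)))"
    using shift_energy_double_le[OF assms(1,2) \<open>finite B\<close>]
    by (rule mult_left_mono[OF sum_mono]) simp
  also have "\<dots> = 2 ^ card A * (2 powr q * (\<Sum>s\<in>cube {-1, 1} n. ?E s))"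
    using sum_signs_add[OF \<open>finite A\<close> \<open>finite B\<close> \<open>A \<inter> B = {}\<close>, of ?E]
    by (simp only: sum_distrib_left[symmetric] cube_pm1_eq_signs \<open>A \<union> B = {..<n}\<close>)
  finally show ?thesis .
qed

lemma gadd_double: "gadd (2 * m) n x (2 * gadd m n y e) = gadd (2 * m) n (gadd (2 * m) n x (2 * y)) (2 * e)"
  unfolding gadd_gadd
  by (rule gadd_cong) (simp add: gadd_def mod_mult_mult1[symmetric] ring_distribs)

lemma lhs_sum_double_le:
  fixes f :: "(nat \<Rightarrow> int) \<Rightarrow> 'a::metric_space"
  assumes adm: "admissible {-1, 0, 1} q m n C TYPE('a)" and "q \<ge> 1" "C \<ge> 0" "m \<ge> 1"
  shows "lhs_sum q (2 * m) n f \<le> (C * real (2 * m)) powr q * rhs_avg {-1, 1} q (2 * m) n f"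
proof -
  let ?E = "shift_energy q (2 * m) n f" and ?K = "(C * real m) powr q"
  let ?X = "\<Sum>d\<in>cube {-1, 0, 1} n. ?E (2 * d)" and ?S = "\<Sum>s\<in>cube {-1, 1} n. ?E s"
  have "2 * mei m j = mei (2 * m) j" for j
    by (simp add: mei_def fun_eq_iff)
  then have pullback: "lhs_sum q (2 * m) n f \<le> ?K * (?X / 3 ^ n)"
    using admissible_pullback[where T = "\<lambda>y. 2 * y", OF adm \<open>q \<ge> 1\<close> \<open>C \<ge> 0\<close> \<open>m \<ge> 1\<close> _ gadd_double]
      \<open>m \<ge> 1\<close> by (simp add: lhs_sum_eq)
  have "?X / 3 ^ n \<le> 2 powr q * ?S / 2 ^ n"
  proof -
    have "2 ^ n * ?X = (\<Sum>A\<in>Pow {..<n}. 2 ^ n * (\<Sum>d\<in>signs A. ?E (2 * d)))"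
      by (simp add: sum_cube_eq_sum_signs sum_distrib_left)
    also have "\<dots> \<le> (\<Sum>A\<in>Pow {..<n}. 2 ^ card A * (2 powr q * ?S))"
      using sum_signs_shift_energy_double_le[of "2 * m" q _ n f] \<open>m \<ge> 1\<close> \<open>q \<ge> 1\<close>
      by (intro sum_mono) auto
    also have "\<dots> = 3 ^ n * (2 powr q * ?S)"
      by (simp add: sum_Pow_two_power flip: sum_distrib_right)
    finally show ?thesis
      by (simp add: field_simps)
  qed
  then have "?K * (?X / 3 ^ n) \<le> ?K * (2 powr q * ?S / 2 ^ n)"
    by (rule mult_left_mono) simp
  also have "\<dots> = (C * real (2 * m)) powr q * rhs_avg {-1, 1} q (2 * m) n f"
    using \<open>C \<ge> 0\<close> by (simp add: rhs_avg_eq powr_mult)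
  finally show ?thesis
    using pullback by linarith
qed

lemma admissible_signs_double:
  assumes "admissible {-1, 0, 1} q m n C TYPE('a::metric_space)" "q \<ge> 1" "C \<ge> 0" "m \<ge> 1"
  shows "admissible {-1, 1} q (2 * m) n C TYPE('a)"
  using lhs_sum_double_le[OF assms] assms(2,3) by (simp add: admissible_iff_powr)

lemma Cconst_signs_double_le:
  assumes "q \<ge> 1" "m \<ge> 1"
  shows "Cconst {-1, 1} q (2 * m) n TYPE('a::metric_space) \<le> Cconst {-1, 0, 1} q m n TYPE('a)"
  unfolding Cconst_eq_Inf_admissible
  using admissible_signs_double[OF _ assms(1) _ assms(2)] by (intro Inf_superset_mono) force

lemma ereal_le_mult_if_le_above:
  fixes x y :: ereal
  assumes "c > 0" "y \<ge> 0" and le: "\<And>C. y < ereal C \<Longrightarrow> x \<le> ereal (c * C)"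
  shows "x \<le> ereal c * y"
proof (cases y)
  case (real r)
  show ?thesis
  proof (rule ereal_le_epsilon2)
    fix e :: real
    assume "e > 0"
    then have "x \<le> ereal (c * (r + e / c))"
      using \<open>c > 0\<close> real by (intro le) simp
    also have "c * (r + e / c) = c * r + e"
      using \<open>c > 0\<close> by (simp add: field_simps)
    finally show "x \<le> ereal c * y + ereal e"
      using real by simp
  qed
qed (use assms in auto)

lemma Cconst_cube_le_Max_Cconst_signs:
  assumes "q \<ge> 1" "m \<ge> 1" "n \<ge> 1" "c \<ge> (3 / 2) powr (1 / q)"
  shows "Cconst {-1, 0, 1} q m n TYPE('a::metric_space)
           \<le> ereal c * Max ((\<lambda>k. Cconst {-1, 1} q m k TYPE('a)) ` {1..n})"
    (is "_ \<le> _ * ?M")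
proof (rule ereal_le_mult_if_le_above)
  show "c > 0"
    using assms(4) by (rule less_le_trans[rotated]) simp
  have le_Max: "Cconst {-1, 1} q m k TYPE('a) \<le> ?M" if "k \<in> {1..n}" for k
    using that by (intro Max_ge) auto
  have "0 \<le> Cconst {-1, 1} q m 1 TYPE('a)"
    by (rule Cconst_nonneg)
  also have "\<dots> \<le> ?M"
    using \<open>n \<ge> 1\<close> by (intro le_Max) simp
  finally show "?M \<ge> 0" .
  fix C
  assume "?M < ereal C"
  with \<open>?M \<ge> 0\<close> have "C > 0"
    using le_less_trans[of 0 ?M "ereal C"] by simp
  have adm: "\<forall>k\<in>{1..n}. admissible {-1, 1} q m k C TYPE('a)"
    using le_Max \<open>?M < ereal C\<close> by (blast intro: admissible_if_Cconst_less le_less_trans)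
  have "admissible {-1, 0, 1} q m n (c * C) TYPE('a)"
    using admissible_cube_of_admissible_signs[OF adm \<open>q \<ge> 1\<close> _ \<open>m \<ge> 1\<close> \<open>n \<ge> 1\<close>] \<open>C > 0\<close> assms(4)
    by (auto intro: admissible_mono)
  then show "Cconst {-1, 0, 1} q m n TYPE('a) \<le> ereal (c * C)"
    using \<open>c > 0\<close> \<open>C > 0\<close> by (intro Cconst_le_admissible) simp_all
qed

theorem mainTheorem12:
  fixes q :: real and m n :: nat
  assumes "1 \<le> q" and "1 \<le> m" and "1 \<le> n"
  shows "Cconst {-1,0,1} q m n TYPE('a::metric_space)
           \<le> ereal (6 powr (1/q)) * Max ((\<lambda>k. Cconst {-1,1} q m k TYPE('a)) ` {1..n})
       \<and> Cconst {-1,1} q (2*m) n TYPE('a) \<le> 2 * Cconst {-1,0,1} q m n TYPE('a)"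
proof
  have "(3 / 2) powr (1 / q) \<le> 6 powr (1 / q)"
    using \<open>1 \<le> q\<close> by (intro powr_mono2) auto
  then show "Cconst {-1,0,1} q m n TYPE('a)
      \<le> ereal (6 powr (1/q)) * Max ((\<lambda>k. Cconst {-1,1} q m k TYPE('a)) ` {1..n})"
    using Cconst_cube_le_Max_Cconst_signs assms by blast
next
  have "Cconst {-1,0,1} q m n TYPE('a) \<le> 2 * Cconst {-1,0,1} q m n TYPE('a)"
    using Cconst_nonneg[of "{-1,0,1}" q m n "TYPE('a)"] by (cases "Cconst {-1,0,1} q m n TYPE('a)") auto
  with Cconst_signs_double_le[OF \<open>1 \<le> q\<close> \<open>1 \<le> m\<close>]
  show "Cconst {-1,1} q (2*m) n TYPE('a) \<le> 2 * Cconst {-1,0,1} q m n TYPE('a)"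
    by (rule order_trans)
qed

end
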